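(* Let $M$ be a commutative and cocommutative Hopf algebra over $\mathbb{C}$, let $A$ be a commutative $\mathbb{C}$-algebra, let $r$ be an $A$-valued bicharacter on $M$, and let $s=r\circ r^{t}$ be its symmetrization. Then for all $a,b\in M$, \[ \mathrm{EQ}_{r}(ab)=\mathrm{EQ}_{r}(a)\bullet_{s}\mathrm{EQ}_{r}(b). \] In other words, $\mathrm{EQ}_r$ is a homomorphism from $(M\otimes A,\cdot)$ to $(M\otimes A,\bullet_s)$.
   Context: For a Hopf algebra $M$ with coproduct $\Delta$, counit $\eta$ and antipode $S$, Sweedler notation is used: $\Delta(a)=\sum a'\otimes a''$, $\Delta^2(a)=\sum a'\otimes a''\otimes a'''$ (summation signs omitted). An $A$-valued bicharacter on $M$ is a linear map $r:M\otimes M\to A$ such that for all $a,b,c\in M$: $r(1\otimes a)=\eta(a)=r(a\otimes 1)$, $r(ab\otimes c)=\sum r(a\otimes c')r(b\otimes c'')$, and $r(a\otimes bc)=\sum r(a'\otimes b)r(a''\otimes c)$. The convolution of bicharacters is $(r\circ t)(a\otimes b)=\sum r(a'\otimes b')t(a''\otimes b'')$, and $r^{t}(a\otimes b)=r(b\otimes a)$. A bicharacter $t$ is symmetric if $t=t^t$. The symmetrization of $r$ is $s=r\circ r^t$, i.e. $s(a\otimes b)=\sum r(a'\otimes b')r(b''\otimes a'')$. Write $M_A=M\otimes_{\mathbb{C}}A$ with the $A$-linear extension of the product of $M$. For a symmetric bicharacter $t$, the product $\bullet_t$ on $M_A$ is the $A$-bilinear extension of $a\bullet_t b=\sum a'b'\,t(a''\otimes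 b'')$ for $a,b\in M$. The map $\mathrm{EQ}_r:M\to M_A$ is $\mathrm{EQ}_r(m)=\sum r(m'\otimes m'')m'''$, extended $A$-linearly to $M_A$. *)

theory Defs
  imports Complex_Main
begin

text \<open>A complex algebra structure on a ring: a ring homomorphism from the complex
numbers into the centre; scalar multiplication c.x is iota c * x.\<close>
definition calg :: "(complex \<Rightarrow> 'a::ring_1) \<Rightarrow> bool" where
  "calg \<iota> \<longleftrightarrow> \<iota> 1 = 1 \<and> (\<forall>c d. \<iota> (c + d) = \<iota> c + \<iota> d)
     \<and> (\<forall>c d. \<iota> (c * d) = \<iota> c * \<iota> d) \<and> (\<forall>c x. \<iota> c * x = x * \<iota> c)"

definition clin :: "(complex \<Rightarrow> 'a::ring_1) \<Rightarrow> (complex \<Rightarrow> 'b::ring_1) \<Rightarrow> ('a \<Rightarrow> 'b) \<Rightarrow> bool" where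
  "clin \<iota>a \<iota>b f \<longleftrightarrow> (\<forall>x y. f (x + y) = f x + f y) \<and> (\<forall>c x. f (\<iota>a c * x) = \<iota>b c * f x)"

definition cbilin :: "(complex \<Rightarrow> 'a::ring_1) \<Rightarrow> (complex \<Rightarrow> 'b::ring_1) \<Rightarrow> (complex \<Rightarrow> 'c::ring_1)
    \<Rightarrow> ('a \<Rightarrow> 'b \<Rightarrow> 'c) \<Rightarrow> bool" where
  "cbilin \<iota>1 \<iota>2 \<iota>3 f \<longleftrightarrow> (\<forall>y. clin \<iota>1 \<iota>3 (\<lambda>x. f x y)) \<and> (\<forall>x. clin \<iota>2 \<iota>3 (f x))"

definition ctrilin :: "(complex \<Rightarrow> 'a::ring_1) \<Rightarrow> (complex \<Rightarrow> 'b::ring_1) \<Rightarrow> (complex \<Rightarrow> 'c::ring_1)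
    \<Rightarrow> (complex \<Rightarrow> 'd::ring_1) \<Rightarrow> ('a \<Rightarrow> 'b \<Rightarrow> 'c \<Rightarrow> 'd) \<Rightarrow> bool" where
  "ctrilin \<iota>1 \<iota>2 \<iota>3 \<iota>4 f \<longleftrightarrow> (\<forall>y z. clin \<iota>1 \<iota>4 (\<lambda>x. f x y z)) \<and> (\<forall>x z. clin \<iota>2 \<iota>4 (\<lambda>y. f x y z))
      \<and> (\<forall>x y. clin \<iota>3 \<iota>4 (f x y))"

text \<open>Elements of tensor products are represented by finite lists of pure tensors
(sum of the pure tensors).  Two representatives denote the same tensor iff all complex
multilinear functionals agree on them (the algebraic dual separates points).\<close>
definition teq2 :: "(complex \<Rightarrow> 'a::ring_1) \<Rightarrow> (complex \<Rightarrow> 'b::ring_1)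
    \<Rightarrow> ('a \<times> 'b) list \<Rightarrow> ('a \<times> 'b) list \<Rightarrow> bool" where
  "teq2 \<iota>1 \<iota>2 X Y \<longleftrightarrow> (\<forall>\<phi> :: 'a \<Rightarrow> 'b \<Rightarrow> complex. cbilin \<iota>1 \<iota>2 (\<lambda>c. c) \<phi> \<longrightarrow>
      sum_list (map (\<lambda>(x, y). \<phi> x y) X) = sum_list (map (\<lambda>(x, y). \<phi> x y) Y))"

definition teq3 :: "(complex \<Rightarrow> 'a::ring_1) \<Rightarrow> (complex \<Rightarrow> 'b::ring_1) \<Rightarrow> (complex \<Rightarrow> 'c::ring_1)
    \<Rightarrow> ('a \<times> 'b \<times> 'c) list \<Rightarrow> ('a \<times> 'b \<times> 'c) list \<Rightarrow> bool" where
  "teq3 \<iota>1 \<iota>2 \<iota>3 X Y \<longleftrightarrow> (\<forall>\<phi> :: 'a \<Rightarrow> 'b \<Rightarrow> 'c \<Rightarrow> complex. ctrilin \<iota>1 \<iota>2 \<iota>3 (\<lambda>c. c) \<phi> \<longrightarrow>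
      sum_list (map (\<lambda>(x, y, z). \<phi> x y z) X) = sum_list (map (\<lambda>(x, y, z). \<phi> x y z) Y))"

text \<open>Hopf algebra over C on the ring M, with complex structure iota, coproduct Delta
(a representative of Delta(a) in M (x) M), counit eps and antipode S.\<close>
definition hopf_algebra :: "(complex \<Rightarrow> 'm::ring_1) \<Rightarrow> ('m \<Rightarrow> ('m \<times> 'm) list)
    \<Rightarrow> ('m \<Rightarrow> complex) \<Rightarrow> ('m \<Rightarrow> 'm) \<Rightarrow> bool" where
  "hopf_algebra \<iota> \<Delta> \<epsilon> S \<longleftrightarrow> calg \<iota>
   \<and> (\<forall>a b. teq2 \<iota> \<iota> (\<Delta> (a + b)) (\<Delta> a @ \<Delta> b))
   \<and> (\<forall>c a. teq2 \<iota> \<iota> (\<Delta> (\<iota> c * a)) (map (\<lambda>(x, y). (\<iota> c * x, y)) (\<Delta> a)))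
   \<and> (\<forall>a. teq3 \<iota> \<iota> \<iota>
          (concat (map (\<lambda>(x, y). map (\<lambda>(u, v). (u, v, y)) (\<Delta> x)) (\<Delta> a)))
          (concat (map (\<lambda>(x, y). map (\<lambda>(u, v). (x, u, v)) (\<Delta> y)) (\<Delta> a))))
   \<and> clin \<iota> (\<lambda>c. c) \<epsilon>
   \<and> (\<forall>a. sum_list (map (\<lambda>(x, y). \<iota> (\<epsilon> x) * y) (\<Delta> a)) = a
          \<and> sum_list (map (\<lambda>(x, y). x * \<iota> (\<epsilon> y)) (\<Delta> a)) = a)
   \<and> teq2 \<iota> \<iota> (\<Delta> 1) [(1, 1)]
   \<and> (\<forall>a b. teq2 \<iota> \<iota> (\<Delta> (a * b))
          (concat (map (\<lambda>(x, y). map (\<lambda>(u, v). (x * u, y * v)) (\<Delta> b)) (\<Delta> a))))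
   \<and> \<epsilon> 1 = 1 \<and> (\<forall>a b. \<epsilon> (a * b) = \<epsilon> a * \<epsilon> b)
   \<and> clin \<iota> \<iota> S
   \<and> (\<forall>a. sum_list (map (\<lambda>(x, y). S x * y) (\<Delta> a)) = \<iota> (\<epsilon> a)
          \<and> sum_list (map (\<lambda>(x, y). x * S y) (\<Delta> a)) = \<iota> (\<epsilon> a))"

definition cocommutative :: "(complex \<Rightarrow> 'm::ring_1) \<Rightarrow> ('m \<Rightarrow> ('m \<times> 'm) list) \<Rightarrow> bool" where
  "cocommutative \<iota> \<Delta> \<longleftrightarrow> (\<forall>a. teq2 \<iota> \<iota> (\<Delta> a) (map prod.swap (\<Delta> a)))"

text \<open>A-valued bicharacter r : M (x) M -> A, represented as a C-bilinear map.\<close>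
definition bicharacter :: "(complex \<Rightarrow> 'm::ring_1) \<Rightarrow> ('m \<Rightarrow> ('m \<times> 'm) list) \<Rightarrow> ('m \<Rightarrow> complex)
    \<Rightarrow> (complex \<Rightarrow> 'a::comm_ring_1) \<Rightarrow> ('m \<Rightarrow> 'm \<Rightarrow> 'a) \<Rightarrow> bool" where
  "bicharacter \<iota> \<Delta> \<epsilon> \<iota>A r \<longleftrightarrow> cbilin \<iota> \<iota> \<iota>A r
   \<and> (\<forall>a. r 1 a = \<iota>A (\<epsilon> a) \<and> r a 1 = \<iota>A (\<epsilon> a))
   \<and> (\<forall>a b c. r (a * b) c = sum_list (map (\<lambda>(x, y). r a x * r b y) (\<Delta> c)))
   \<and> (\<forall>a b c. r a (b * c) = sum_list (map (\<lambda>(x, y). r x b * r y c) (\<Delta> a)))"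

text \<open>Symmetrization s = r o r^t: s(a (x) b) = sum r(a' (x) b') r(b'' (x) a'').\<close>
definition symz :: "('m::ring_1 \<Rightarrow> ('m \<times> 'm) list) \<Rightarrow> ('m \<Rightarrow> 'm \<Rightarrow> 'a::comm_ring_1) \<Rightarrow> 'm \<Rightarrow> 'm \<Rightarrow> 'a" where
  "symz \<Delta> r a b = sum_list (concat (map (\<lambda>(x, y). map (\<lambda>(u, v). r x u * r v y) (\<Delta> b)) (\<Delta> a)))"

text \<open>EQ_r(m) = sum r(m' (x) m'') m''' in M_A = M (x) A, with Delta^2 = (id (x) Delta) Delta.\<close>
definition EQr :: "('m::ring_1 \<Rightarrow> ('m \<times> 'm) list) \<Rightarrow> ('m \<Rightarrow> 'm \<Rightarrow> 'a::comm_ring_1) \<Rightarrow> 'm \<Rightarrow> ('m \<times> 'a) list" where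
  "EQr \<Delta> r m = concat (map (\<lambda>(x, w). map (\<lambda>(y, z). (z, r x y)) (\<Delta> w)) (\<Delta> m))"

text \<open>The product bullet_t on M_A: A-bilinear extension of a bullet b = sum a'b' t(a'' (x) b'').\<close>
definition bullet :: "('m::ring_1 \<Rightarrow> ('m \<times> 'm) list) \<Rightarrow> ('m \<Rightarrow> 'm \<Rightarrow> 'a::comm_ring_1)
    \<Rightarrow> ('m \<times> 'a) list \<Rightarrow> ('m \<times> 'a) list \<Rightarrow> ('m \<times> 'a) list" where
  "bullet \<Delta> t X Y = concat (map (\<lambda>(a, \<alpha>). concat (map (\<lambda>(b, \<beta>).
      concat (map (\<lambda>(x, y). map (\<lambda>(u, v). (x * u, t y v * \<alpha> * \<beta>)) (\<Delta> b)) (\<Delta> a))) Y)) X)"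

end

theory Submission
  imports Defs
begin

text \<open>Pair both sides with an arbitrary bilinear functional \<open>\<phi>\<close> on \<open>M \<otimes> A\<close>.
Expanding the bicharacter identities and the multiplicativity of \<open>\<Delta>\<close>, each side becomes
a double iterated Sweedler sum over \<open>\<Delta>\<^sup>4 a\<close> and \<open>\<Delta>\<^sup>4 b\<close> of a product of four values of
\<open>r\<close>. By coassociativity an iterated Sweedler sum does not depend on the bracketing, and by
cocommutativity it is invariant under permutations of the tensor factors; the two summands
differ only by such a permutation of the factors of \<open>a\<close> and of \<open>b\<close>.\<close>

lemma sum_list_map_concat:
  "sum_list (map f (concat L)) = sum_list (map (\<lambda>l. sum_list (map f l)) L)"
  for f :: "_ \<Rightarrow> 'c::monoid_add"
  by (induction L) simp_all

lemma sum_list_concat: "sum_list (concat L) = sum_list (map sum_list L)"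
  for L :: "'c::monoid_add list list"
  by (induction L) simp_all

lemma sum_list_map_commute:
  "sum_list (map (\<lambda>x. sum_list (map (f x) B)) A) = sum_list (map (\<lambda>y. sum_list (map (\<lambda>x. f x y) A)) B)"
  for f :: "_ \<Rightarrow> _ \<Rightarrow> 'c::comm_monoid_add"
  by (induction A) (simp_all add: sum_list_addf)

lemma teq2_sum_eq:
  assumes "teq2 \<iota>1 \<iota>2 X Y" "cbilin \<iota>1 \<iota>2 (\<lambda>c. c) F"
  shows "sum_list (map (\<lambda>(x, y). F x y) X) = sum_list (map (\<lambda>(x, y). F x y) Y)"
  using assms unfolding teq2_def by blast

lemma clin_sum_list:
  assumes "\<And>z. z \<in> set L \<Longrightarrow> clin \<iota>a \<iota>b (\<lambda>x. G x z)"
  shows "clin \<iota>a \<iota>b (\<lambda>x. sum_list (map (G x) L))"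
  using assms by (induction L) (auto simp: clin_def algebra_simps)

text \<open>\<open>expand_at k u v t\<close> replaces the entry \<open>t ! k\<close> by the two entries \<open>u, v\<close>:
the effect of applying \<open>\<Delta>\<close> to the \<open>k\<close>-th tensor factor.\<close>

definition expand_at :: "nat \<Rightarrow> 'a \<Rightarrow> 'a \<Rightarrow> 'a list \<Rightarrow> 'a list" where
  "expand_at k u v t = take k t @ u # v # drop (Suc k) t"

definition swap_adj :: "nat \<Rightarrow> 'a list \<Rightarrow> 'a list" where
  "swap_adj k t = t[k := t ! Suc k, Suc k := t ! k]"

lemma length_expand_at: "k < length t \<Longrightarrow> length (expand_at k u v t) = Suc (length t)"
  by (simp add: expand_at_def)

lemma expand_at_Suc_Cons: "expand_at (Suc k) u v (x # t) = x # expand_at k u v t"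
  by (simp add: expand_at_def)

lemma expand_at_update_fst: "k \<le> length t \<Longrightarrow> expand_at k u v t = (expand_at k w v t)[k := u]"
  by (simp add: expand_at_def list_update_append)

lemma expand_at_update_snd: "k \<le> length t \<Longrightarrow> expand_at k u v t = (expand_at k u w t)[Suc k := v]"
  by (simp add: expand_at_def list_update_append)

lemma expand_at_update_same: "k < length l \<Longrightarrow> expand_at k u v (l[k := x]) = expand_at k u v l"
  by (simp add: expand_at_def)

lemma expand_at_update_less:
  "j < k \<Longrightarrow> k < length l \<Longrightarrow> expand_at k u v (l[j := x]) = (expand_at k u v l)[j := x]"
  by (simp add: expand_at_def list_update_append take_update_swap)

lemma expand_at_update_greater:
  assumes "k < j" "j < length l"
  shows "expand_at k u v (l[j := x]) = (expand_at k u v l)[Suc j := x]"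
proof -
  obtain d where d: "j = Suc k + d" using assms(1) by (metis less_imp_Suc_add add_Suc)
  show ?thesis using assms unfolding d by (simp add: expand_at_def drop_update_swap list_update_append min_def)
qed

lemma swap_adj_expand_at: "k < length t \<Longrightarrow> swap_adj k (expand_at k u v t) = expand_at k v u t"
  by (simp add: swap_adj_def expand_at_def nth_append list_update_append min_def)

lemma swap_adj_update:
  assumes "j < length l" "Suc k < length l"
  shows "swap_adj k (l[j := x]) = (swap_adj k l)[(if j = k then Suc k else if j = Suc k then k else j) := x]"
  by (rule nth_equalityI) (use assms in \<open>auto simp: swap_adj_def nth_list_update\<close>)

lemma length_3_cases: "length t = 3 \<Longrightarrow> \<exists>a b c. t = [a, b, c]"
  by (cases t; cases "tl t"; cases "tl (tl t)") auto

lemma length_5_cases: "length t = 5 \<Longrightarrow> \<exists>a b c d e. t = [a, b, c, d, e]"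
  by (cases t; cases "tl t"; cases "tl (tl t)"; cases "tl (tl (tl t))"; cases "tl (tl (tl (tl t)))") auto

locale cocomm_hopf =
  fixes \<iota> :: "complex \<Rightarrow> 'm::ring_1" and \<Delta> :: "'m \<Rightarrow> ('m \<times> 'm) list"
    and \<epsilon> :: "'m \<Rightarrow> complex" and S :: "'m \<Rightarrow> 'm"
  assumes hopf: "hopf_algebra \<iota> \<Delta> \<epsilon> S"
    and cocom: "cocommutative \<iota> \<Delta>"
begin

abbreviation lin :: "('m \<Rightarrow> complex) \<Rightarrow> bool" where
  "lin \<equiv> clin \<iota> (\<lambda>c. c)"

abbreviation bil :: "('m \<Rightarrow> 'm \<Rightarrow> complex) \<Rightarrow> bool" where
  "bil \<equiv> cbilin \<iota> \<iota> (\<lambda>c. c)"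

definition sweedler :: "('m \<Rightarrow> 'm \<Rightarrow> 'b::comm_monoid_add) \<Rightarrow> 'm \<Rightarrow> 'b" where
  "sweedler F a = sum_list (map (\<lambda>(x, y). F x y) (\<Delta> a))"

lemma iota_commute: "\<iota> c * x = x * \<iota> c"
  using hopf by (simp add: hopf_algebra_def calg_def)

lemma lin_sweedler:
  assumes "bil F"
  shows "lin (sweedler F)"
proof -
  have add: "teq2 \<iota> \<iota> (\<Delta> (a + b)) (\<Delta> a @ \<Delta> b)" for a b
    using hopf by (simp add: hopf_algebra_def)
  have scale: "teq2 \<iota> \<iota> (\<Delta> (\<iota> c * a)) (map (\<lambda>(x, y). (\<iota> c * x, y)) (\<Delta> a))" for c a
    using hopf by (simp add: hopf_algebra_def)
  have "F (\<iota> c * x) y = c * F x y" for c x y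
    using assms by (simp add: cbilin_def clin_def)
  then show ?thesis
    using teq2_sum_eq[OF add assms] teq2_sum_eq[OF scale assms]
    by (simp add: clin_def sweedler_def case_prod_unfold o_def flip: sum_list_const_mult)
qed

lemma sweedler_coassoc:
  assumes "ctrilin \<iota> \<iota> \<iota> (\<lambda>c. c) G"
  shows "sweedler (\<lambda>x y. sweedler (\<lambda>u v. G u v y) x) a = sweedler (\<lambda>x y. sweedler (G x) y) a"
proof -
  have "teq3 \<iota> \<iota> \<iota>
          (concat (map (\<lambda>(x, y). map (\<lambda>(u, v). (u, v, y)) (\<Delta> x)) (\<Delta> a)))
          (concat (map (\<lambda>(x, y). map (\<lambda>(u, v). (x, u, v)) (\<Delta> y)) (\<Delta> a)))"
    using hopf by (simp add: hopf_algebra_def)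
  with assms show ?thesis
    unfolding teq3_def by (simp add: sweedler_def sum_list_map_concat o_def case_prod_unfold)
qed

lemma sweedler_flip:
  assumes "bil F"
  shows "sweedler F a = sweedler (\<lambda>x y. F y x) a"
proof -
  have "teq2 \<iota> \<iota> (\<Delta> a) (map prod.swap (\<Delta> a))"
    using cocom by (simp add: cocommutative_def)
  from teq2_sum_eq[OF this assms] show ?thesis
    by (simp add: sweedler_def o_def case_prod_unfold)
qed

lemma sweedler_mult:
  assumes "bil F"
  shows "sweedler F (a * b) = sweedler (\<lambda>x y. sweedler (\<lambda>u v. F (x * u) (y * v)) b) a"
proof -
  have "teq2 \<iota> \<iota> (\<Delta> (a * b)) (concat (map (\<lambda>(x, y). map (\<lambda>(u, v). (x * u, y * v)) (\<Delta> b)) (\<Delta> a)))"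
    using hopf by (simp add: hopf_algebra_def)
  from teq2_sum_eq[OF this assms] show ?thesis
    by (simp add: sweedler_def sum_list_map_concat o_def case_prod_unfold)
qed

lemma sweedler_commute:
  "sweedler (\<lambda>x y. sweedler (G x y) c) a = sweedler (\<lambda>u v. sweedler (\<lambda>x y. G x y u v) a) c"
  unfolding sweedler_def case_prod_unfold by (rule sum_list_map_commute)

lemma lin_sweedler_param: "(\<And>u v. lin (\<lambda>x. G x u v)) \<Longrightarrow> lin (\<lambda>x. sweedler (G x) a)"
  unfolding sweedler_def case_prod_unfold by (rule clin_sum_list) auto


primrec coprod_iter :: "nat \<Rightarrow> 'm \<Rightarrow> 'm list list" where
  "coprod_iter 0 a = [[a]]"
| "coprod_iter (Suc n) a = concat (map (\<lambda>(x, y). map ((#) x) (coprod_iter n y)) (\<Delta> a))"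

definition sweedler_iter :: "nat \<Rightarrow> ('m list \<Rightarrow> complex) \<Rightarrow> 'm \<Rightarrow> complex" where
  "sweedler_iter n F a = sum_list (map F (coprod_iter n a))"

lemma sweedler_iter_0 [simp]: "sweedler_iter 0 F = (\<lambda>a. F [a])"
  by (simp add: sweedler_iter_def fun_eq_iff)

lemma sweedler_iter_Suc: "sweedler_iter (Suc n) F = sweedler (\<lambda>x. sweedler_iter n (\<lambda>t. F (x # t)))"
  by (simp add: sweedler_iter_def sweedler_def sum_list_map_concat o_def case_prod_unfold fun_eq_iff)

lemma length_coprod_iter: "t \<in> set (coprod_iter n a) \<Longrightarrow> length t = Suc n"
  by (induction n arbitrary: t a) (auto simp: case_prod_unfold)

lemma sweedler_iter_cong:
  "(\<And>t. length t = Suc n \<Longrightarrow> F t = G t) \<Longrightarrow> sweedler_iter n F a = sweedler_iter n G a"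
  unfolding sweedler_iter_def
  by (rule arg_cong[where f=sum_list], rule map_cong[OF refl]) (blast dest: length_coprod_iter)

lemma sweedler_iter_commute:
  "sweedler_iter n (\<lambda>t. sweedler (G t) c) = (\<lambda>a. sweedler (\<lambda>u v. sweedler_iter n (\<lambda>t. G t u v) a) c)"
  unfolding sweedler_def sweedler_iter_def case_prod_unfold by (rule ext sum_list_map_commute)+

lemma lin_sweedler_iter_param:
  "(\<And>t. length t = Suc n \<Longrightarrow> lin (\<lambda>x. G x t)) \<Longrightarrow> lin (\<lambda>x. sweedler_iter n (G x) a)"
  unfolding sweedler_iter_def by (rule clin_sum_list) (auto dest: length_coprod_iter)

definition multilin :: "nat \<Rightarrow> ('m list \<Rightarrow> complex) \<Rightarrow> bool" where
  "multilin n F \<longleftrightarrow> (\<forall>l j. length l = Suc n \<longrightarrow> j \<le> n \<longrightarrow> lin (\<lambda>x. F (l[j := x])))"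

lemma multilinD: "multilin n F \<Longrightarrow> length l = Suc n \<Longrightarrow> j \<le> n \<Longrightarrow> lin (\<lambda>x. F (l[j := x]))"
  by (simp add: multilin_def)

lemma multilin_Cons: "multilin (Suc n) F \<Longrightarrow> multilin n (\<lambda>t. F (x # t))"
  unfolding multilin_def
proof (intro allI impI)
  fix l :: "'m list" and j
  assume "\<forall>l j. length l = Suc (Suc n) \<longrightarrow> j \<le> Suc n \<longrightarrow> lin (\<lambda>x. F (l[j := x]))"
    "length l = Suc n" "j \<le> n"
  then have "lin (\<lambda>y. F ((x # l)[Suc j := y]))" by (metis Suc_le_mono length_Cons)
  then show "lin (\<lambda>y. F (x # l[j := y]))" by simp
qed

lemma lin_Cons: "multilin (Suc n) F \<Longrightarrow> length t = Suc n \<Longrightarrow> lin (\<lambda>x. F (x # t))"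
  using multilinD[of "Suc n" F "0 # t" 0] by simp

lemma multilin_sweedler_iter_param:
  "(\<And>s. multilin n (\<lambda>t. G t s)) \<Longrightarrow> multilin n (\<lambda>t. sweedler_iter m (G t) b)"
  unfolding multilin_def by (auto intro!: lin_sweedler_iter_param)

lemma lin_sweedler_iter: "multilin n F \<Longrightarrow> lin (sweedler_iter n F)"
proof (induction n arbitrary: F)
  case 0
  then show ?case using multilinD[of 0 F "[0]" 0] by simp
next
  case (Suc n)
  have "bil (\<lambda>x. sweedler_iter n (\<lambda>t. F (x # t)))"
    unfolding cbilin_def
    using Suc.IH[OF multilin_Cons[OF Suc.prems]] lin_sweedler_iter_param[of n "\<lambda>x t. F (x # t)"]
      lin_Cons[OF Suc.prems]
    by auto
  then show ?case unfolding sweedler_iter_Suc by (rule lin_sweedler)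
qed

lemma bil_sweedler_iter_Cons: "multilin (Suc n) F \<Longrightarrow> bil (\<lambda>x. sweedler_iter n (\<lambda>t. F (x # t)))"
  unfolding cbilin_def
  using lin_sweedler_iter[OF multilin_Cons] lin_sweedler_iter_param[of n "\<lambda>x t. F (x # t)"] lin_Cons
  by blast

lemma bil_expand_at:
  assumes "multilin (Suc n) F" "length t = Suc n" "k \<le> n"
  shows "bil (\<lambda>u v. F (expand_at k u v t))"
proof -
  have "lin (\<lambda>x. F ((expand_at k 0 v t)[k := x]))" "lin (\<lambda>x. F ((expand_at k u 0 t)[Suc k := x]))" for u v
    by (rule multilinD[OF assms(1)], use assms in \<open>auto simp: length_expand_at\<close>)+
  moreover have "(\<lambda>x. F (expand_at k x v t)) = (\<lambda>x. F ((expand_at k 0 v t)[k := x]))"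
    "(\<lambda>x. F (expand_at k u x t)) = (\<lambda>x. F ((expand_at k u 0 t)[Suc k := x]))" for u v
    by (intro ext; rule arg_cong[where f=F];
        metis assms(2,3) expand_at_update_fst expand_at_update_snd le_SucI)+
  ultimately show ?thesis
    unfolding cbilin_def by metis
qed

lemma sweedler_iter_expand:
  "multilin (Suc n) F \<Longrightarrow> k \<le> n \<Longrightarrow>
   sweedler_iter (Suc n) F a = sweedler_iter n (\<lambda>t. sweedler (\<lambda>u v. F (expand_at k u v t)) (t ! k)) a"
proof (induction n arbitrary: k F a)
  case 0
  then show ?case by (simp add: sweedler_iter_Suc expand_at_def)
next
  case (Suc m)
  show ?case
  proof (cases k)
    case 0
    define G where "G x u v = sweedler_iter m (\<lambda>t. F (x # u # t)) v" for x u v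
    have "ctrilin \<iota> \<iota> \<iota> (\<lambda>c. c) G"
      unfolding ctrilin_def G_def
      using lin_Cons[OF Suc.prems(1)] lin_Cons[OF multilin_Cons[OF Suc.prems(1)]]
        lin_sweedler_iter[OF multilin_Cons[OF multilin_Cons[OF Suc.prems(1)]]]
      by (auto intro!: lin_sweedler_iter_param)
    then have "sweedler (\<lambda>x y. sweedler (\<lambda>u v. G x u v) y) a = sweedler (\<lambda>x y. sweedler (\<lambda>u v. G u v y) x) a"
      by (simp add: sweedler_coassoc)
    then show ?thesis
      by (simp add: sweedler_iter_Suc G_def expand_at_def 0 sweedler_iter_commute)
  next
    case (Suc k')
    with Suc.prems have "k' \<le> m" by simp
    then have "sweedler_iter (Suc m) (\<lambda>t. F (x # t)) =
        sweedler_iter m (\<lambda>t. sweedler (\<lambda>u v. F (x # expand_at k' u v t)) (t ! k'))" for x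
      by (intro ext Suc.IH[OF multilin_Cons[OF Suc.prems(1)]])
    then show ?thesis
      by (simp add: sweedler_iter_Suc expand_at_Suc_Cons Suc)
  qed
qed

lemma multilin_expand:
  assumes "multilin (Suc n) G" "k \<le> n"
  shows "multilin n (\<lambda>t. sweedler (\<lambda>u v. G (expand_at k u v t)) (t ! k))"
  unfolding multilin_def
proof (intro allI impI)
  fix l :: "'m list" and j assume l: "length l = Suc n" "j \<le> n"
  consider "j = k" | "j < k" | "k < j" by arith
  then show "lin (\<lambda>x. sweedler (\<lambda>u v. G (expand_at k u v (l[j := x]))) (l[j := x] ! k))"
  proof cases
    case 1
    have "lin (sweedler (\<lambda>u v. G (expand_at k u v l)))"
      by (rule lin_sweedler, rule bil_expand_at) (use assms l in auto)
    with 1 l assms show ?thesis by (simp add: expand_at_update_same)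
  next
    case 2
    have "lin (\<lambda>x. sweedler (\<lambda>u v. G ((expand_at k u v l)[j := x])) (l ! k))"
      by (rule lin_sweedler_param, rule multilinD[OF assms(1)])
        (use l assms 2 in \<open>auto simp: length_expand_at\<close>)
    with 2 l assms show ?thesis by (simp add: expand_at_update_less)
  next
    case 3
    have "lin (\<lambda>x. sweedler (\<lambda>u v. G ((expand_at k u v l)[Suc j := x])) (l ! k))"
      by (rule lin_sweedler_param, rule multilinD[OF assms(1)])
        (use l assms 3 in \<open>auto simp: length_expand_at\<close>)
    with 3 l assms show ?thesis by (simp add: expand_at_update_greater)
  qed
qed

lemma sweedler_iter_mult:
  "multilin n F \<Longrightarrow> sweedler_iter n F (a * b) = sweedler_iter n (\<lambda>t. sweedler_iter n (\<lambda>s. F (map2 (*) t s)) b) a"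
proof (induction n arbitrary: F a b)
  case 0
  then show ?case by simp
next
  case (Suc n)
  have "sweedler_iter (Suc n) F (a * b) =
      sweedler (\<lambda>x y. sweedler (\<lambda>u v. sweedler_iter n (\<lambda>t. F (x * u # t)) (y * v)) b) a"
    by (simp add: sweedler_iter_Suc sweedler_mult[OF bil_sweedler_iter_Cons[OF Suc.prems]])
  also have "\<dots> = sweedler (\<lambda>x y. sweedler (\<lambda>u v.
      sweedler_iter n (\<lambda>t. sweedler_iter n (\<lambda>s. F (x * u # map2 (*) t s)) v) y) b) a"
    using Suc.IH[OF multilin_Cons[OF Suc.prems]] by simp
  also have "\<dots> = sweedler (\<lambda>x y. sweedler_iter n (\<lambda>t. sweedler (\<lambda>u v.
      sweedler_iter n (\<lambda>s. F (x * u # map2 (*) t s)) v) b) y) a"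
    by (simp only: sweedler_iter_commute)
  finally show ?case
    by (simp add: sweedler_iter_Suc)
qed

lemma multilin_swap_adj:
  assumes "multilin n F" "k < n"
  shows "multilin n (\<lambda>t. F (swap_adj k t))"
  unfolding multilin_def
proof (intro allI impI)
  fix l :: "'m list" and j assume l: "length l = Suc n" "j \<le> n"
  have "lin (\<lambda>x. F ((swap_adj k l)[(if j = k then Suc k else if j = Suc k then k else j) := x]))"
    by (rule multilinD[OF assms(1)]) (use l assms(2) in \<open>auto simp: swap_adj_def\<close>)
  then show "lin (\<lambda>x. F (swap_adj k (l[j := x])))"
    using swap_adj_update[of j l k] l assms(2) by simp
qed

lemma sweedler_iter_swap_adj:
  assumes "multilin (Suc n) F" "k \<le> n"
  shows "sweedler_iter (Suc n) F a = sweedler_iter (Suc n) (\<lambda>t. F (swap_adj k t)) a"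
proof -
  have "sweedler_iter (Suc n) F a = sweedler_iter n (\<lambda>t. sweedler (\<lambda>u v. F (expand_at k u v t)) (t ! k)) a"
    by (rule sweedler_iter_expand[OF assms])
  also have "\<dots> = sweedler_iter n (\<lambda>t. sweedler (\<lambda>u v. F (expand_at k v u t)) (t ! k)) a"
    by (rule sweedler_iter_cong) (use bil_expand_at[OF assms(1) _ assms(2)] sweedler_flip in blast)
  also have "\<dots> = sweedler_iter n (\<lambda>t. sweedler (\<lambda>u v. F (swap_adj k (expand_at k u v t))) (t ! k)) a"
    by (rule sweedler_iter_cong) (use assms(2) in \<open>simp add: swap_adj_expand_at less_Suc_eq_le\<close>)
  also have "\<dots> = sweedler_iter (Suc n) (\<lambda>t. F (swap_adj k t)) a"
    by (rule sweedler_iter_expand[symmetric, OF multilin_swap_adj[OF assms(1)] assms(2)])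
      (use assms(2) in simp)
  finally show ?thesis .
qed

lemma sweedler_iter_swaps:
  "multilin n F \<Longrightarrow> \<forall>k\<in>set ks. k < n \<Longrightarrow>
   sweedler_iter n F a = sweedler_iter n (\<lambda>t. F (foldr swap_adj ks t)) a"
proof (induction ks arbitrary: F)
  case Nil
  then show ?case by simp
next
  case (Cons k ks)
  obtain n' where n: "n = Suc n'" using Cons.prems(2) by (cases n) auto
  have "sweedler_iter n F a = sweedler_iter n (\<lambda>t. F (swap_adj k t)) a"
    using sweedler_iter_swap_adj[of n' F k] Cons.prems n by simp
  also have "\<dots> = sweedler_iter n (\<lambda>t. F (swap_adj k (foldr swap_adj ks t))) a"
    using Cons.IH[of "\<lambda>t. F (swap_adj k t)"] multilin_swap_adj Cons.prems by simp
  finally show ?case by simp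
qed

lemma sweedler_iter_4_split_first_two:
  assumes "multilin 4 G"
  shows "sweedler_iter 4 G a =
    sweedler_iter 2 (\<lambda>t. sweedler (\<lambda>x y. sweedler (\<lambda>p q. G [p, q, x, y, t ! 2]) (t ! 0)) (t ! 1)) a"
proof -
  have G: "multilin (Suc 3) G" using assms by (simp add: numeral_eq_Suc)
  define H where "H t = sweedler (\<lambda>u v. G (expand_at 2 u v t)) (t ! 2)" for t
  have H: "multilin (Suc 2) H"
    unfolding H_def using multilin_expand[OF G, of 2] by (simp add: numeral_eq_Suc)
  have "sweedler_iter 4 G a = sweedler_iter (Suc 3) G a" by (simp add: numeral_eq_Suc)
  also have "\<dots> = sweedler_iter 3 H a"
    unfolding H_def by (rule sweedler_iter_expand[OF G]) simp
  also have "\<dots> = sweedler_iter (Suc 2) H a" by (simp add: numeral_eq_Suc)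
  also have "\<dots> = sweedler_iter 2 (\<lambda>t. sweedler (\<lambda>u v. H (expand_at 0 u v t)) (t ! 0)) a"
    by (rule sweedler_iter_expand[OF H]) simp
  also have "\<dots> = sweedler_iter 2 (\<lambda>t. sweedler (\<lambda>p q. sweedler (\<lambda>x y. G [p, q, x, y, t ! 2]) (t ! 1)) (t ! 0)) a"
  proof (rule sweedler_iter_cong)
    fix t :: "'m list" assume "length t = Suc 2"
    then obtain t0 t1 t2 where "t = [t0, t1, t2]" using length_3_cases[of t] by auto
    then show "sweedler (\<lambda>u v. H (expand_at 0 u v t)) (t ! 0) =
        sweedler (\<lambda>p q. sweedler (\<lambda>x y. G [p, q, x, y, t ! 2]) (t ! 1)) (t ! 0)"
      by (simp add: H_def expand_at_def)
  qed
  also have "\<dots> = sweedler_iter 2 (\<lambda>t. sweedler (\<lambda>x y. sweedler (\<lambda>p q. G [p, q, x, y, t ! 2]) (t ! 0)) (t ! 1)) a"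
    by (rule sweedler_iter_cong) (rule sweedler_commute)
  finally show ?thesis .
qed

lemma sweedler_iter_4_split_last:
  assumes "multilin 4 G"
  shows "sweedler_iter 4 G a =
    sweedler_iter 2 (\<lambda>t. sweedler (\<lambda>x y. sweedler (\<lambda>p q. G [t ! 0, t ! 1, x, p, q]) y) (t ! 2)) a"
proof -
  have G: "multilin (Suc 3) G" using assms by (simp add: numeral_eq_Suc)
  define H where "H t = sweedler (\<lambda>u v. G (expand_at 3 u v t)) (t ! 3)" for t
  have H: "multilin (Suc 2) H"
    unfolding H_def using multilin_expand[OF G, of 3] by (simp add: numeral_eq_Suc)
  have "sweedler_iter 4 G a = sweedler_iter (Suc 3) G a" by (simp add: numeral_eq_Suc)
  also have "\<dots> = sweedler_iter 3 H a"
    unfolding H_def by (rule sweedler_iter_expand[OF G]) simp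
  also have "\<dots> = sweedler_iter (Suc 2) H a" by (simp add: numeral_eq_Suc)
  also have "\<dots> = sweedler_iter 2 (\<lambda>t. sweedler (\<lambda>u v. H (expand_at 2 u v t)) (t ! 2)) a"
    by (rule sweedler_iter_expand[OF H]) simp
  also have "\<dots> = sweedler_iter 2 (\<lambda>t. sweedler (\<lambda>x y. sweedler (\<lambda>p q. G [t ! 0, t ! 1, x, p, q]) y) (t ! 2)) a"
  proof (rule sweedler_iter_cong)
    fix t :: "'m list" assume "length t = Suc 2"
    then obtain t0 t1 t2 where "t = [t0, t1, t2]" using length_3_cases[of t] by auto
    then show "sweedler (\<lambda>u v. H (expand_at 2 u v t)) (t ! 2) =
        sweedler (\<lambda>x y. sweedler (\<lambda>p q. G [t ! 0, t ! 1, x, p, q]) y) (t ! 2)"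
      by (simp add: H_def expand_at_def numeral_eq_Suc)
  qed
  finally show ?thesis .
qed

lemma multilin_4I:
  assumes "\<And>b c d e. lin (\<lambda>x. F [x, b, c, d, e])" "\<And>a c d e. lin (\<lambda>x. F [a, x, c, d, e])"
    "\<And>a b d e. lin (\<lambda>x. F [a, b, x, d, e])" "\<And>a b c e. lin (\<lambda>x. F [a, b, c, x, e])"
    "\<And>a b c d. lin (\<lambda>x. F [a, b, c, d, x])"
  shows "multilin 4 F"
  unfolding multilin_def
proof (intro allI impI)
  fix l :: "'m list" and j :: nat assume "length l = Suc 4" "j \<le> 4"
  moreover from this obtain a b c d e where "l = [a, b, c, d, e]" using length_5_cases[of l] by auto
  ultimately show "lin (\<lambda>x. F (l[j := x]))"
    using assms by (auto simp: le_Suc_eq numeral_eq_Suc)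
qed

lemma multilin_2I:
  assumes "\<And>b c. lin (\<lambda>x. F [x, b, c])" "\<And>a c. lin (\<lambda>x. F [a, x, c])" "\<And>a b. lin (\<lambda>x. F [a, b, x])"
  shows "multilin 2 F"
  unfolding multilin_def
proof (intro allI impI)
  fix l :: "'m list" and j :: nat assume "length l = Suc 2" "j \<le> 2"
  moreover from this obtain a b c where "l = [a, b, c]" using length_3_cases[of l] by auto
  ultimately show "lin (\<lambda>x. F (l[j := x]))"
    using assms by (auto simp: le_Suc_eq numeral_eq_Suc)
qed

lemma sum_list_EQr:
  "sum_list (map (\<lambda>(x, \<alpha>). g x \<alpha>) (EQr \<Delta> r m)) = sweedler_iter 2 (\<lambda>t. g (t ! 2) (r (t ! 0) (t ! 1))) m"
  by (simp add: EQr_def numeral_eq_Suc sweedler_iter_Suc sweedler_def sum_list_map_concat o_def case_prod_unfold)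

lemma sum_list_bullet:
  "sum_list (map (\<lambda>(x, \<gamma>). g x \<gamma>) (bullet \<Delta> t X Y)) =
   sum_list (map (\<lambda>(p, \<alpha>). sum_list (map (\<lambda>(q, \<beta>).
     sweedler (\<lambda>x y. sweedler (\<lambda>u v. g (x * u) (t y v * \<alpha> * \<beta>)) q) p) Y)) X)"
  by (simp add: bullet_def sweedler_def sum_list_map_concat o_def case_prod_unfold)

lemma sweedler_mult_const: "sweedler F c * (\<beta>::'b::comm_semiring_1) = sweedler (\<lambda>x y. F x y * \<beta>) c"
  by (simp add: sweedler_def sum_list_mult_const case_prod_unfold)

lemma const_mult_sweedler: "(\<beta>::'b::comm_semiring_1) * sweedler F c = sweedler (\<lambda>x y. \<beta> * F x y) c"
  by (simp add: sweedler_def sum_list_const_mult case_prod_unfold)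

lemma symz_eq_sweedler: "symz \<Delta> r y v = sweedler (\<lambda>p q. sweedler (\<lambda>p' q'. r p p' * r q' q) v) y"
  by (simp add: symz_def sweedler_def sum_list_concat o_def case_prod_unfold)

lemma clin_ident: "clin \<iota> \<iota> (\<lambda>x. x)"
  by (simp add: clin_def)

lemma clin_mult_right: "clin \<iota> \<iota> (\<lambda>x. x * c)"
  by (simp add: clin_def algebra_simps)

lemma clin_mult_left: "clin \<iota> \<iota> (\<lambda>x. c * x)"
  by (simp add: clin_def algebra_simps) (metis iota_commute mult.assoc)

end

locale bicharacter_pairing = cocomm_hopf \<iota> \<Delta> \<epsilon> S
  for \<iota> :: "complex \<Rightarrow> 'm::ring_1" and \<Delta> :: "'m \<Rightarrow> ('m \<times> 'm) list"
    and \<epsilon> :: "'m \<Rightarrow> complex" and S :: "'m \<Rightarrow> 'm" +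
  fixes \<iota>A :: "complex \<Rightarrow> 'a::comm_ring_1" and r :: "'m \<Rightarrow> 'm \<Rightarrow> 'a"
    and \<phi> :: "'m \<Rightarrow> 'a \<Rightarrow> complex"
  assumes bichar: "bicharacter \<iota> \<Delta> \<epsilon> \<iota>A r"
    and pairing: "cbilin \<iota> \<iota>A (\<lambda>c. c) \<phi>"
begin

lemma pairing_sweedler: "\<phi> m (sweedler F c) = sweedler (\<lambda>x y. \<phi> m (F x y)) c"
proof -
  have add: "\<phi> m (\<alpha> + \<beta>) = \<phi> m \<alpha> + \<phi> m \<beta>" for \<alpha> \<beta>
    using pairing by (simp add: cbilin_def clin_def)
  then have "\<phi> m 0 = 0"
    by (metis add_cancel_right_right add_0)
  with add have "\<phi> m (sum_list (map f L)) = sum_list (map (\<lambda>z. \<phi> m (f z)) L)" for f and L :: "'b list"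
    by (induction L) auto
  then show ?thesis by (simp add: sweedler_def case_prod_unfold)
qed

lemma r_mult_left: "r (a * b) c = sweedler (\<lambda>x y. r a x * r b y) c"
  using bichar by (simp add: bicharacter_def sweedler_def case_prod_unfold)

lemma r_mult_right: "r a (b * c) = sweedler (\<lambda>x y. r x b * r y c) a"
  using bichar by (simp add: bicharacter_def sweedler_def case_prod_unfold)

lemma lin_pairing_fst: "clin \<iota> \<iota> f \<Longrightarrow> lin (\<lambda>x. \<phi> (f x) \<alpha>)"
  using pairing by (simp add: cbilin_def clin_def)

lemma lin_pairing_snd: "clin \<iota> \<iota>A g \<Longrightarrow> lin (\<lambda>x. \<phi> m (g x))"
  using pairing by (simp add: cbilin_def clin_def)

lemma clin_r_fst: "clin \<iota> \<iota>A (\<lambda>x. r x y)"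
  using bichar by (simp add: bicharacter_def cbilin_def)

lemma clin_r_snd: "clin \<iota> \<iota>A (r y)"
  using bichar by (simp add: bicharacter_def cbilin_def)

lemma clin_times_right: "clin \<iota> \<iota>A g \<Longrightarrow> clin \<iota> \<iota>A (\<lambda>x. g x * \<beta>)"
  by (simp add: clin_def algebra_simps)

lemma clin_times_left: "clin \<iota> \<iota>A g \<Longrightarrow> clin \<iota> \<iota>A (\<lambda>x. \<beta> * g x)"
  by (simp add: clin_def algebra_simps)

lemmas linearity_intros = lin_pairing_fst lin_pairing_snd clin_ident clin_mult_right clin_mult_left
  clin_r_fst clin_r_snd clin_times_right clin_times_left

lemma pairing_r_mult_mult:
  "\<phi> m (r (t0 * s0) (t1 * s1)) =
   sweedler (\<lambda>x y. sweedler (\<lambda>p q. sweedler (\<lambda>u v. sweedler (\<lambda>p' q'.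
     \<phi> m (r p x * r q u * (r p' y * r q' v))) s0) s1) t0) t1"
proof -
  have "bil (\<lambda>x y. \<phi> m (r t0 x * r s0 y))"
    unfolding cbilin_def by (intro allI conjI linearity_intros)
  then have "\<phi> m (r (t0 * s0) (t1 * s1)) =
      sweedler (\<lambda>x y. sweedler (\<lambda>u v. \<phi> m (r t0 (x * u) * r s0 (y * v))) s1) t1"
    by (simp only: r_mult_left pairing_sweedler sweedler_mult)
  also have "\<dots> = sweedler (\<lambda>x y. sweedler (\<lambda>u v. \<phi> m (sweedler (\<lambda>p q.
      r p x * r q u * sweedler (\<lambda>p' q'. r p' y * r q' v) s0) t0)) s1) t1"
    by (simp only: r_mult_right sweedler_mult_const)
  also have "\<dots> = sweedler (\<lambda>x y. sweedler (\<lambda>u v. sweedler (\<lambda>p q. sweedler (\<lambda>p' q'.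
      \<phi> m (r p x * r q u * (r p' y * r q' v))) s0) t0) s1) t1"
    by (simp only: const_mult_sweedler pairing_sweedler)
  also have "\<dots> = sweedler (\<lambda>x y. sweedler (\<lambda>p q. sweedler (\<lambda>u v. sweedler (\<lambda>p' q'.
      \<phi> m (r p x * r q u * (r p' y * r q' v))) s0) s1) t0) t1"
    by (rule arg_cong[where f="\<lambda>F. sweedler F t1"], intro ext, rule sweedler_commute)
  finally show ?thesis .
qed

lemma pairing_symz:
  "sweedler (\<lambda>x y. sweedler (\<lambda>u v. \<phi> (x * u) (symz \<Delta> r y v * \<alpha> * \<beta>)) Y) X =
   sweedler (\<lambda>x y. sweedler (\<lambda>p q. sweedler (\<lambda>u v. sweedler (\<lambda>p' q'.
     \<phi> (x * u) (r p p' * r q' q * \<alpha> * \<beta>)) v) Y) y) X"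
proof -
  have "sweedler (\<lambda>x y. sweedler (\<lambda>u v. \<phi> (x * u) (symz \<Delta> r y v * \<alpha> * \<beta>)) Y) X =
    sweedler (\<lambda>x y. sweedler (\<lambda>u v. sweedler (\<lambda>p q. sweedler (\<lambda>p' q'.
      \<phi> (x * u) (r p p' * r q' q * \<alpha> * \<beta>)) v) y) Y) X"
    by (simp only: symz_eq_sweedler sweedler_mult_const pairing_sweedler)
  also have "\<dots> = sweedler (\<lambda>x y. sweedler (\<lambda>p q. sweedler (\<lambda>u v. sweedler (\<lambda>p' q'.
      \<phi> (x * u) (r p p' * r q' q * \<alpha> * \<beta>)) v) Y) y) X"
    by (rule arg_cong[where f="\<lambda>F. sweedler F X"], intro ext, rule sweedler_commute)
  finally show ?thesis .
qed

text \<open>The summands of the two sides of the theorem paired with \<open>\<phi>\<close>, as sums over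
\<open>t \<in> \<Delta>\<^sup>4 a\<close> and \<open>s \<in> \<Delta>\<^sup>4 b\<close>.\<close>

definition lhs_summand :: "'m list \<Rightarrow> 'm list \<Rightarrow> complex" where
  "lhs_summand t s = \<phi> (t!4 * s!4) (r (t!0) (t!2) * r (t!1) (s!2) * r (s!0) (t!3) * r (s!1) (s!3))"

definition rhs_summand :: "'m list \<Rightarrow> 'm list \<Rightarrow> complex" where
  "rhs_summand t s = \<phi> (t!2 * s!2) (r (t!3) (s!3) * r (s!4) (t!4) * r (t!0) (t!1) * r (s!0) (s!1))"

lemma multilin_lhs_summand: "multilin 4 (\<lambda>t. lhs_summand t s)" "multilin 4 (lhs_summand t)"
  by (rule multilin_4I; simp add: lhs_summand_def; intro linearity_intros)+

lemma multilin_rhs_summand: "multilin 4 (\<lambda>t. rhs_summand t s)" "multilin 4 (rhs_summand t)"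
  by (rule multilin_4I; simp add: rhs_summand_def; intro linearity_intros)+

lemma pairing_EQr_mult:
  "sum_list (map (\<lambda>(x, \<alpha>). \<phi> x \<alpha>) (EQr \<Delta> r (a * b))) =
   sweedler_iter 4 (\<lambda>t. sweedler_iter 4 (lhs_summand t) b) a"
proof -
  have "multilin 2 (\<lambda>t. \<phi> (t!2) (r (t!0) (t!1)))"
    by (rule multilin_2I; simp; intro linearity_intros)
  then have "sum_list (map (\<lambda>(x, \<alpha>). \<phi> x \<alpha>) (EQr \<Delta> r (a * b))) =
      sweedler_iter 2 (\<lambda>t. sweedler_iter 2 (\<lambda>s.
        \<phi> (map2 (*) t s ! 2) (r (map2 (*) t s ! 0) (map2 (*) t s ! 1))) b) a"
    by (simp only: sum_list_EQr sweedler_iter_mult)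
  also have "\<dots> = sweedler_iter 2 (\<lambda>t. sweedler_iter 2 (\<lambda>s.
      \<phi> (t!2 * s!2) (r (t!0 * s!0) (t!1 * s!1))) b) a"
  proof (rule sweedler_iter_cong, rule sweedler_iter_cong)
    fix t s :: "'m list" assume "length t = Suc 2" "length s = Suc 2"
    then obtain t0 t1 t2 s0 s1 s2 where "t = [t0, t1, t2]" "s = [s0, s1, s2]"
      using length_3_cases[of t] length_3_cases[of s] by auto
    then show "\<phi> (map2 (*) t s ! 2) (r (map2 (*) t s ! 0) (map2 (*) t s ! 1)) =
        \<phi> (t!2 * s!2) (r (t!0 * s!0) (t!1 * s!1))"
      by simp
  qed
  also have "\<dots> = sweedler_iter 2 (\<lambda>t. sweedler_iter 2 (\<lambda>s.
      sweedler (\<lambda>x y. sweedler (\<lambda>p q. sweedler (\<lambda>u v. sweedler (\<lambda>p' q'.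
        \<phi> (t!2 * s!2) (r p x * r q u * (r p' y * r q' v))) (s!0)) (s!1)) (t!0)) (t!1)) b) a"
    by (simp only: pairing_r_mult_mult)
  also have "\<dots> = sweedler_iter 2 (\<lambda>t. sweedler (\<lambda>x y. sweedler (\<lambda>p q.
      sweedler_iter 2 (\<lambda>s. sweedler (\<lambda>u v. sweedler (\<lambda>p' q'.
        \<phi> (t!2 * s!2) (r p x * r q u * (r p' y * r q' v))) (s!0)) (s!1)) b) (t!0)) (t!1)) a"
    by (simp only: sweedler_iter_commute)
  also have "\<dots> = sweedler_iter 2 (\<lambda>t. sweedler (\<lambda>x y. sweedler (\<lambda>p q.
      sweedler_iter 4 (lhs_summand [p, q, x, y, t ! 2]) b) (t ! 0)) (t ! 1)) a"
    by (simp add: sweedler_iter_4_split_first_two[OF multilin_lhs_summand(2)] lhs_summand_def mult.assoc)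
  also have "\<dots> = sweedler_iter 4 (\<lambda>t. sweedler_iter 4 (lhs_summand t) b) a"
    by (rule sweedler_iter_4_split_first_two[symmetric,
          OF multilin_sweedler_iter_param[OF multilin_lhs_summand(1)]])
  finally show ?thesis .
qed

lemma pairing_bullet_EQr:
  "sum_list (map (\<lambda>(x, \<alpha>). \<phi> x \<alpha>) (bullet \<Delta> (symz \<Delta> r) (EQr \<Delta> r a) (EQr \<Delta> r b))) =
   sweedler_iter 4 (\<lambda>t. sweedler_iter 4 (rhs_summand t) b) a"
proof -
  have "sum_list (map (\<lambda>(x, \<alpha>). \<phi> x \<alpha>) (bullet \<Delta> (symz \<Delta> r) (EQr \<Delta> r a) (EQr \<Delta> r b))) =
      sweedler_iter 2 (\<lambda>t. sweedler_iter 2 (\<lambda>s. sweedler (\<lambda>x y. sweedler (\<lambda>u v.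
        \<phi> (x * u) (symz \<Delta> r y v * r (t!0) (t!1) * r (s!0) (s!1))) (s!2)) (t!2)) b) a"
    by (simp add: sum_list_bullet sum_list_EQr)
  also have "\<dots> = sweedler_iter 2 (\<lambda>t. sweedler_iter 2 (\<lambda>s. sweedler (\<lambda>x y. sweedler (\<lambda>p q.
      sweedler (\<lambda>u v. sweedler (\<lambda>p' q'.
        \<phi> (x * u) (r p p' * r q' q * r (t!0) (t!1) * r (s!0) (s!1))) v) (s!2)) y) (t!2)) b) a"
    by (simp only: pairing_symz)
  also have "\<dots> = sweedler_iter 2 (\<lambda>t. sweedler (\<lambda>x y. sweedler (\<lambda>p q.
      sweedler_iter 2 (\<lambda>s. sweedler (\<lambda>u v. sweedler (\<lambda>p' q'.
        \<phi> (x * u) (r p p' * r q' q * r (t!0) (t!1) * r (s!0) (s!1))) v) (s!2)) b) y) (t!2)) a"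
    by (simp only: sweedler_iter_commute)
  also have "\<dots> = sweedler_iter 2 (\<lambda>t. sweedler (\<lambda>x y. sweedler (\<lambda>p q.
      sweedler_iter 4 (rhs_summand [t ! 0, t ! 1, x, p, q]) b) y) (t ! 2)) a"
    by (simp add: sweedler_iter_4_split_last[OF multilin_rhs_summand(2)] rhs_summand_def)
  also have "\<dots> = sweedler_iter 4 (\<lambda>t. sweedler_iter 4 (rhs_summand t) b) a"
    by (rule sweedler_iter_4_split_last[symmetric,
          OF multilin_sweedler_iter_param[OF multilin_rhs_summand(1)]])
  finally show ?thesis .
qed

text \<open>The swap sequences realise the permutations of the factors of \<open>a\<close> and of \<open>b\<close>
that turn the left-hand summand into the right-hand one.\<close>

lemma sweedler_iter_lhs_rhs_summand:
  "sweedler_iter 4 (\<lambda>t. sweedler_iter 4 (lhs_summand t) b) a =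
   sweedler_iter 4 (\<lambda>t. sweedler_iter 4 (rhs_summand t) b) a"
proof -
  have "sweedler_iter 4 (lhs_summand t) b =
      sweedler_iter 4 (\<lambda>s. lhs_summand t (foldr swap_adj [0,1,2,1,3,2] s)) b" for t
    by (rule sweedler_iter_swaps[OF multilin_lhs_summand(2)]) simp
  then have "sweedler_iter 4 (\<lambda>t. sweedler_iter 4 (lhs_summand t) b) a =
      sweedler_iter 4 (\<lambda>t. sweedler_iter 4 (\<lambda>s. lhs_summand t (foldr swap_adj [0,1,2,1,3,2] s)) b) a"
    by simp
  also have "\<dots> = sweedler_iter 4 (\<lambda>t. sweedler_iter 4 (\<lambda>s.
      lhs_summand (foldr swap_adj [1,3,2] t) (foldr swap_adj [0,1,2,1,3,2] s)) b) a"
    by (rule sweedler_iter_swaps[OF multilin_sweedler_iter_param[OF multilin_lhs_summand(1)]]) simp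
  also have "\<dots> = sweedler_iter 4 (\<lambda>t. sweedler_iter 4 (rhs_summand t) b) a"
  proof (rule sweedler_iter_cong, rule sweedler_iter_cong)
    fix t s :: "'m list" assume "length t = Suc 4" "length s = Suc 4"
    then obtain t0 t1 t2 t3 t4 s0 s1 s2 s3 s4 where "t = [t0, t1, t2, t3, t4]" "s = [s0, s1, s2, s3, s4]"
      using length_5_cases[of t] length_5_cases[of s] by auto
    then show "lhs_summand (foldr swap_adj [1,3,2] t) (foldr swap_adj [0,1,2,1,3,2] s) = rhs_summand t s"
      by (simp add: swap_adj_def lhs_summand_def rhs_summand_def ac_simps)
  qed
  finally show ?thesis .
qed

end

theorem lemma2p6:
  fixes \<iota> :: "complex \<Rightarrow> 'm::ring_1" and \<Delta> :: "'m \<Rightarrow> ('m \<times> 'm) list"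
    and \<epsilon> :: "'m \<Rightarrow> complex" and S :: "'m \<Rightarrow> 'm"
    and \<iota>A :: "complex \<Rightarrow> 'a::comm_ring_1" and r :: "'m \<Rightarrow> 'm \<Rightarrow> 'a"
    and a b :: 'm
  assumes "hopf_algebra \<iota> \<Delta> \<epsilon> S"
    and "\<forall>x y :: 'm. x * y = y * x"
    and "cocommutative \<iota> \<Delta>"
    and "calg \<iota>A"
    and "bicharacter \<iota> \<Delta> \<epsilon> \<iota>A r"
  shows "teq2 \<iota> \<iota>A (EQr \<Delta> r (a * b)) (bullet \<Delta> (symz \<Delta> r) (EQr \<Delta> r a) (EQr \<Delta> r b))"
  unfolding teq2_def
proof (intro allI impI)
  fix \<phi> :: "'m \<Rightarrow> 'a \<Rightarrow> complex"
  assume "cbilin \<iota> \<iota>A (\<lambda>c. c) \<phi>"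
  with assms interpret bicharacter_pairing \<iota> \<Delta> \<epsilon> S \<iota>A r \<phi>
    by unfold_locales
  show "sum_list (map (\<lambda>(x, \<alpha>). \<phi> x \<alpha>) (EQr \<Delta> r (a * b))) =
      sum_list (map (\<lambda>(x, \<alpha>). \<phi> x \<alpha>) (bullet \<Delta> (symz \<Delta> r) (EQr \<Delta> r a) (EQr \<Delta> r b)))"
    by (simp only: pairing_EQr_mult pairing_bullet_EQr sweedler_iter_lhs_rhs_summand)
qed

end
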